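(* Let $T$ be a string, let $1\le j\le |T|$, $1\le i\le j+1$, let $w$ be a string, and let $L=T[1..i-1]$, $R=T[j+1..|T|]$ and $T'=LwR$. Assume $|L|\ge |R|$, $|w|\le |L|/2$, and that the longest border of $Lw$ is longer than $|w|$. Partition the set of borders of $Lw$ into groups $G_1,\dots,G_m$ so that two borders lie in the same group iff they have the same smallest period, and let $p_k$ be the common smallest period of the borders in $G_k$. Assume that $T'$ has a border longer than $R$, and let $b^\star$ be the border of $Lw$ such that $b^\star R$ is the longest border of $T'$; let $k^\star$ be the index of the group containing $b^\star$. Let $\alpha_{k^\star}$ be the exponent of the longest prefix of $T'$ having period $p_{k^\star}$, and let $r_{k^\star}=\mathit{lce}_{T'}(|T'|-|R|-p_{k^\star}+1,\ |T'|-|R|+1)$. If $b^\star$ is periodic, then $b^\star$ is the longest border of $Lw$ whose length is at most $\alpha_{k^\star}p_{k^\star}-r_{k^\star}$.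
   Context: $S[i..j]$ denotes the factor of $S$ from position $i$ to $j$ (empty if $i>j$). A border of a nonempty string $S$ is a string that is both a proper prefix and a proper suffix of $S$. If $S$ has a border $b$ then $|S|-|b|$ is a period of $S$; $\mathsf{per}(S)$ is the smallest period of $S$. The exponent of $S$ is $|S|/\mathsf{per}(S)$; $S$ is periodic if $\mathsf{per}(S)\le|S|/2$. For a string $S$ and positions $a,b$, $\mathit{lce}_S(a,b)$ is the length of the longest common prefix of $S[a..|S|]$ and $S[b..|S|]$. *)

theory Defs
  imports Main "HOL.Real"
begin

text \<open>Strings are lists; paper positions are 1-based, list indices 0-based.\<close>

definition is_border :: "'a list \<Rightarrow> 'a list \<Rightarrow> bool" where
  "is_border S b \<longleftrightarrow> S \<noteq> [] \<and> length b < length S \<and>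
     take (length b) S = b \<and> drop (length S - length b) S = b"

definition is_longest_border :: "'a list \<Rightarrow> 'a list \<Rightarrow> bool" where
  "is_longest_border S b \<longleftrightarrow> is_border S b \<and>
     (\<forall>b'. is_border S b' \<longrightarrow> length b' \<le> length b)"

definition is_period :: "'a list \<Rightarrow> nat \<Rightarrow> bool" where
  "is_period S p \<longleftrightarrow> 0 < p \<and> p \<le> length S \<and>
     (\<forall>i. i + p < length S \<longrightarrow> S ! i = S ! (i + p))"

definition per :: "'a list \<Rightarrow> nat" where
  "per S = (LEAST p. is_period S p)"

definition exponent :: "'a list \<Rightarrow> real" where
  "exponent S = real (length S) / real (per S)"

definition periodic :: "'a list \<Rightarrow> bool" where
  "periodic S \<longleftrightarrow> 2 * per S \<le> length S"

definition longest_prefix_with_period :: "'a list \<Rightarrow> nat \<Rightarrow> 'a list" where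
  "longest_prefix_with_period S p =
     take (GREATEST n. n \<le> length S \<and> is_period (take n S) p) S"

fun lcp_len :: "'a list \<Rightarrow> 'a list \<Rightarrow> nat" where
  "lcp_len (x # xs) (y # ys) = (if x = y then Suc (lcp_len xs ys) else 0)"
| "lcp_len _ _ = 0"

definition lce :: "'a list \<Rightarrow> nat \<Rightarrow> nat \<Rightarrow> nat" where
  "lce S a b = lcp_len (drop (a - 1) S) (drop (b - 1) S)"

end

theory Submission
  imports Defs
begin

text \<open>
  Write X = L w, S = X R, b = |bs|, p = per bs. As bs R is a border of S, the string S begins
  with bs R, and r measures how far the period p of bs, read at the end of X, continues into R.
  So the longest prefix of S with period p has length at least b + r, and exactly b + r when
  r < |R|; its smallest period is p because bs is a prefix of it, so the bound alpha p - r is its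
  length minus r. If r = |R|, then bs R has period p, and a border b' of X longer than bs that
  fits into that prefix together with R yields b' R with period p (it overlaps bs R in bs) agreeing
  with S on its first |b'| letters: a border of S longer than bs R. Only p \<le> b is ever used,
  which holds for every nonempty string.
\<close>

lemma lcp_len_le_length: "lcp_len xs ys \<le> length ys"
  by (induction xs ys rule: lcp_len.induct) auto

lemma nth_less_lcp_len: "k < lcp_len xs ys \<Longrightarrow> xs ! k = ys ! k"
proof (induction xs ys arbitrary: k rule: lcp_len.induct)
  case (1 x xs y ys)
  then show ?case by (cases k) (auto split: if_splits)
qed auto

lemma nth_lcp_len_neq:
  "lcp_len xs ys < length xs \<Longrightarrow> lcp_len xs ys < length ys \<Longrightarrow>
   xs ! lcp_len xs ys \<noteq> ys ! lcp_len xs ys"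
  by (induction xs ys rule: lcp_len.induct) auto

lemma is_period_take:
  assumes "is_period u p" and "p \<le> k"
  shows "is_period (take k u) p"
  using assms unfolding is_period_def by auto

lemma is_period_nth_mod:
  assumes "is_period u p" and "k < length u"
  shows "u ! k = u ! (k mod p)"
  using assms(2)
proof (induction k rule: less_induct)
  case (less k)
  show ?case
  proof (cases "k < p")
    case False
    have "u ! (k - p) = u ! k"
      using assms(1) False less.prems unfolding is_period_def
      by (metis le_add_diff_inverse2 not_less)
    moreover have "(k - p) mod p = k mod p"
      using False by (simp add: le_mod_geq)
    ultimately show ?thesis
      using less.IH[of "k - p"] less.prems assms(1) False unfolding is_period_def by simp
  qed simp
qed

lemma is_period_eqI:
  assumes "is_period u p" and "is_period v p" and "length u = length v"
    and "take p u = take p v"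
  shows "u = v"
proof (rule nth_equalityI)
  fix k assume k: "k < length u"
  have p: "0 < p" "p \<le> length u" using assms(1) unfolding is_period_def by auto
  have "take p u ! (k mod p) = take p v ! (k mod p)" using assms(4) by simp
  then have "u ! (k mod p) = v ! (k mod p)" using p by simp
  then show "u ! k = v ! k"
    using is_period_nth_mod[OF assms(1) k] is_period_nth_mod[OF assms(2)] k assms(3) by simp
qed (fact assms(3))

lemma is_period_append_overlap:
  assumes "is_period (x @ y) p" and "is_period (y @ z) p" and "p \<le> length y"
  shows "is_period (x @ y @ z) p"
  unfolding is_period_def
proof (intro conjI allI impI)
  show "0 < p" "p \<le> length (x @ y @ z)" using assms unfolding is_period_def by auto
  fix i assume i: "i + p < length (x @ y @ z)"
  show "(x @ y @ z) ! i = (x @ y @ z) ! (i + p)"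
  proof (cases "i + p < length (x @ y)")
    case True
    then show ?thesis using assms(1) unfolding is_period_def
      by (metis append_assoc nth_append add_lessD1)
  next
    case False
    have lx: "length x \<le> i" using False assms(3) by simp
    moreover have "i - length x + p < length (y @ z)" using i False lx by simp
    ultimately show ?thesis using assms(2) unfolding is_period_def
      by (simp add: nth_append)
  qed
qed

lemma is_period_per: "S \<noteq> [] \<Longrightarrow> is_period S (per S)"
  unfolding per_def by (rule LeastI[of _ "length S"]) (simp add: is_period_def)

lemma per_le: "is_period S q \<Longrightarrow> per S \<le> q"
  unfolding per_def by (rule Least_le)

lemma per_eq_of_take:
  assumes "is_period S p" and "0 < k" and "k \<le> length S" and "per (take k S) = p"
  shows "per S = p"
proof (rule antisym)
  show le: "per S \<le> p" using assms(1) by (rule per_le)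
  have "take k S \<noteq> []" using assms(2,3) by auto
  then have "is_period (take k S) p" using assms(4) is_period_per by metis
  then have "p \<le> k" unfolding is_period_def using assms(3) by simp
  moreover have "is_period S (per S)" using assms(2,3) by (intro is_period_per) auto
  ultimately have "is_period (take k S) (per S)" using le by (simp add: is_period_take)
  then show "p \<le> per S" using assms(4) per_le by metis
qed

lemma is_period_take_lcp_len:
  assumes "is_period (take k u) p" and "p \<le> k"
  shows "is_period (take (k + lcp_len (drop (k - p) u) (drop k u)) u) p"
  unfolding is_period_def
proof (intro conjI allI impI)
  let ?r = "lcp_len (drop (k - p) u) (drop k u)"
  show "0 < p" "p \<le> length (take (k + ?r) u)" using assms(1) unfolding is_period_def by auto
  fix i assume i: "i + p < length (take (k + ?r) u)"
  show "take (k + ?r) u ! i = take (k + ?r) u ! (i + p)"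
  proof (cases "i + p < k")
    case True
    then show ?thesis using assms(1) i unfolding is_period_def by auto
  next
    case False
    define q where "q = i + p - k"
    have "q < ?r" "k \<le> length u" using i False unfolding q_def by auto
    then have "u ! (k - p + q) = u ! (k + q)"
      using nth_less_lcp_len[of q "drop (k - p) u" "drop k u"] by simp
    moreover have "k - p + q = i" "k + q = i + p" using False assms(2) unfolding q_def by auto
    ultimately show ?thesis using i by simp
  qed
qed

lemma not_is_period_take_Suc_lcp_len:
  assumes "p \<le> k" and "k + lcp_len (drop (k - p) u) (drop k u) < length u"
  shows "\<not> is_period (take (Suc (k + lcp_len (drop (k - p) u) (drop k u))) u) p"
proof
  let ?r = "lcp_len (drop (k - p) u) (drop k u)"
  assume "is_period (take (Suc (k + ?r)) u) p"
  moreover have "k - p + ?r + p < length (take (Suc (k + ?r)) u)" using assms by simp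
  ultimately have "take (Suc (k + ?r)) u ! (k - p + ?r) = take (Suc (k + ?r)) u ! (k - p + ?r + p)"
    unfolding is_period_def by blast
  then have "u ! (k - p + ?r) = u ! (k + ?r)" using assms(1) by simp
  moreover have "u ! (k - p + ?r) \<noteq> u ! (k + ?r)"
    using nth_lcp_len_neq[of "drop (k - p) u" "drop k u"] assms by simp
  ultimately show False by contradiction
qed

lemma take_longest_prefix_with_period:
  "k \<le> length (longest_prefix_with_period S p) \<Longrightarrow>
   take k (longest_prefix_with_period S p) = take k S"
  unfolding longest_prefix_with_period_def by (auto simp: min_def split: if_splits)

lemma
  assumes "k \<le> length S" and "is_period (take k S) p"
  shows is_period_longest_prefix_with_period: "is_period (longest_prefix_with_period S p) p"
    and length_longest_prefix_with_period_ge: "k \<le> length (longest_prefix_with_period S p)"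
proof -
  let ?P = "\<lambda>n. n \<le> length S \<and> is_period (take n S) p"
  have "?P (Greatest ?P)" and "k \<le> Greatest ?P"
    using GreatestI_nat[of ?P k "length S"] Greatest_le_nat[of ?P k "length S"] assms by auto
  then show "is_period (longest_prefix_with_period S p) p"
    and "k \<le> length (longest_prefix_with_period S p)"
    unfolding longest_prefix_with_period_def by auto
qed

lemma length_longest_prefix_with_period_less:
  assumes "is_period (longest_prefix_with_period S p) p" and "p \<le> k"
    and "\<not> is_period (take k S) p"
  shows "length (longest_prefix_with_period S p) < k"
proof (rule ccontr)
  assume "\<not> ?thesis"
  then have "take k (longest_prefix_with_period S p) = take k S"
    by (simp add: take_longest_prefix_with_period)
  then show False using is_period_take[OF assms(1,2)] assms(3) by simp
qed

locale longest_border_extension =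
  fixes X R bs :: "'a list"
  assumes border: "is_border X bs"
    and longest_border: "is_longest_border (X @ R) (bs @ R)"
    and nonempty: "bs \<noteq> []"
begin

definition seam_lce :: nat where
  "seam_lce = lce (X @ R) (length X - per bs + 1) (length X + 1)"

definition period_prefix :: "'a list" where
  "period_prefix = longest_prefix_with_period (X @ R) (per bs)"

lemma per_bs: "is_period bs (per bs)" "0 < per bs" "per bs \<le> length bs"
  using is_period_per[OF nonempty] unfolding is_period_def by auto

lemma take_bs: "take (length bs) X = bs"
  and drop_bs: "drop (length X - length bs) X = bs"
  and length_bs_less: "length bs < length X"
  using border unfolding is_border_def by auto

lemma take_bs_R: "take (length bs + length R) (X @ R) = bs @ R"
  using longest_border unfolding is_longest_border_def is_border_def by simp

lemma take_append_eq_take_bs_R: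
  "k \<le> length bs + length R \<Longrightarrow> take k (X @ R) = take k (bs @ R)"
  by (metis take_bs_R min.absorb1 take_take)

lemma seam_lce_eq_lcp_len:
  "seam_lce = lcp_len (drop (length bs - per bs) (bs @ R)) (drop (length bs) (bs @ R))"
proof -
  have "drop (length X - per bs) (X @ R)
      = drop (length bs - per bs) (drop (length X - length bs) X @ R)"
    using per_bs(3) length_bs_less by (simp add: add.commute)
  then show ?thesis unfolding seam_lce_def lce_def drop_bs by simp
qed

lemma seam_lce_le: "seam_lce \<le> length R"
  using lcp_len_le_length[of "drop (length bs - per bs) (bs @ R)" "drop (length bs) (bs @ R)"]
  by (simp add: seam_lce_eq_lcp_len)

lemma is_period_take_seam_lce: "is_period (take (length bs + seam_lce) (X @ R)) (per bs)"
proof -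
  have "is_period (take (length bs + seam_lce) (bs @ R)) (per bs)"
    using is_period_take_lcp_len[of "length bs" "bs @ R" "per bs"] per_bs
    unfolding seam_lce_eq_lcp_len by simp
  then show ?thesis using take_append_eq_take_bs_R seam_lce_le by simp
qed

lemma
  shows is_period_period_prefix: "is_period period_prefix (per bs)"
    and length_period_prefix_ge: "length bs + seam_lce \<le> length period_prefix"
proof -
  have "length bs + seam_lce \<le> length (X @ R)" using length_bs_less seam_lce_le by simp
  then show "is_period period_prefix (per bs)" "length bs + seam_lce \<le> length period_prefix"
    unfolding period_prefix_def
    using is_period_longest_prefix_with_period length_longest_prefix_with_period_ge
      is_period_take_seam_lce by blast+
qed

lemma per_period_prefix: "per period_prefix = per bs"
proof (rule per_eq_of_take)
  show "is_period period_prefix (per bs)" "length bs \<le> length period_prefix"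
    using is_period_period_prefix length_period_prefix_ge by auto
  show "0 < length bs" using nonempty by simp
  have "take (length bs) period_prefix = bs"
    using length_period_prefix_ge take_bs length_bs_less
    by (simp add: period_prefix_def take_longest_prefix_with_period)
  then show "per (take (length bs) period_prefix) = per bs" by simp
qed

lemma length_period_prefix_le:
  assumes "seam_lce < length R"
  shows "length period_prefix \<le> length bs + seam_lce"
proof -
  have "\<not> is_period (take (Suc (length bs + seam_lce)) (bs @ R)) (per bs)"
    using not_is_period_take_Suc_lcp_len[of "per bs" "length bs" "bs @ R"] per_bs assms
    unfolding seam_lce_eq_lcp_len by simp
  then have "\<not> is_period (take (Suc (length bs + seam_lce)) (X @ R)) (per bs)"
    using take_append_eq_take_bs_R assms by simp
  moreover have "per bs \<le> Suc (length bs + seam_lce)" using per_bs(3) by simp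
  ultimately have "length period_prefix < Suc (length bs + seam_lce)"
    using length_longest_prefix_with_period_less is_period_period_prefix
    unfolding period_prefix_def by blast
  then show ?thesis by simp
qed

lemma border_append_R:
  assumes "seam_lce = length R" and b': "is_border X b'" and "length bs < length b'"
    and "length b' + length R \<le> length period_prefix"
  shows "is_border (X @ R) (b' @ R)"
proof -
  let ?p = "per bs" and ?c = "length b'" and ?m = "length R"
  have b'_X: "?c < length X" "take ?c X = b'" "drop (length X - ?c) X = b'"
    using b' unfolding is_border_def by auto
  have "take ?c period_prefix = b'"
    using assms(4) b'_X by (simp add: period_prefix_def take_longest_prefix_with_period)
  then have period_b': "is_period b' ?p"
    using is_period_take[OF is_period_period_prefix, of ?c] per_bs(3) assms(3) by simp
  have "?c - length bs + (length X - ?c) = length X - length bs"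
    using b'_X(1) assms(3) by simp
  then have b'_ends_bs: "b' = take (?c - length bs) b' @ bs"
    using b'_X(3) drop_bs by (metis append_take_drop_id drop_drop)
  have "is_period (bs @ R) ?p"
    using is_period_take_seam_lce assms(1) take_bs_R by simp
  then have period_b'_R: "is_period (b' @ R) ?p"
    using is_period_append_overlap[of "take (?c - length bs) b'" bs ?p R] period_b' b'_ends_bs
      per_bs(3)
    by (metis append_assoc)
  have period_S: "is_period (take (?c + ?m) (X @ R)) ?p"
    using is_period_take[OF is_period_period_prefix, of "?c + ?m"] per_bs(3) assms(3,4)
    by (simp add: period_prefix_def take_longest_prefix_with_period)
  have "take ?p (take (?c + ?m) (X @ R)) = take ?p (take ?c X)"
    using per_bs(3) assms(3) b'_X(1) by (simp add: min_def)
  then have "take ?p (take (?c + ?m) (X @ R)) = take ?p (b' @ R)"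
    using b'_X(2) per_bs(3) assms(3) by simp
  then have "take (?c + ?m) (X @ R) = b' @ R"
    using is_period_eqI[OF period_S period_b'_R] b'_X(1) by simp
  moreover have "drop (length (X @ R) - (?c + ?m)) (X @ R) = b' @ R"
    using b'_X by simp
  ultimately show ?thesis
    using b'_X(1) unfolding is_border_def by auto
qed

lemma border_length_le:
  assumes "is_border X b'" and "length b' + seam_lce \<le> length period_prefix"
  shows "length b' \<le> length bs"
proof (cases "seam_lce < length R")
  case True
  then show ?thesis using length_period_prefix_le assms(2) by fastforce
next
  case False
  then have "seam_lce = length R" using seam_lce_le by simp
  show ?thesis
  proof (rule ccontr)
    assume longer: "\<not> ?thesis"
    then have "is_border (X @ R) (b' @ R)"
      using border_append_R \<open>seam_lce = length R\<close> assms by simp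
    then show False
      using longest_border longer unfolding is_longest_border_def by fastforce
  qed
qed

end

theorem corollary11:
  fixes T w bs :: "'a list" and i j :: nat
  assumes "1 \<le> j" and "j \<le> length T" and "1 \<le> i" and "i \<le> j + 1"
    and "length (take (i - 1) T) \<ge> length (drop j T)"
    and "real (length w) \<le> real (length (take (i - 1) T)) / 2"
    and "\<exists>b. is_longest_border (take (i - 1) T @ w) b \<and> length b > length w"
    and "\<exists>b. is_border (take (i - 1) T @ w @ drop j T) b \<and> length b > length (drop j T)"
    and "is_border (take (i - 1) T @ w) bs"
    and "is_longest_border (take (i - 1) T @ w @ drop j T) (bs @ drop j T)"
    and "periodic bs"
  shows "let L = take (i - 1) T; R = drop j T; T' = L @ w @ R; p = per bs;
             \<alpha> = exponent (longest_prefix_with_period T' p);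
             r = lce T' (length T' - length R - p + 1) (length T' - length R + 1);
             bound = \<alpha> * real p - real r
         in is_border (L @ w) bs \<and> real (length bs) \<le> bound \<and>
            (\<forall>b'. is_border (L @ w) b' \<and> real (length b') \<le> bound \<longrightarrow> length b' \<le> length bs)"
proof -
  let ?L = "take (i - 1) T" and ?R = "drop j T"
  have "bs \<noteq> []"
  proof
    assume "bs = []"
    obtain b where "is_border (?L @ w @ ?R) b" and "length b > length ?R" using assms(8) by blast
    then show False using assms(10) \<open>bs = []\<close> unfolding is_longest_border_def by fastforce
  qed
  then interpret longest_border_extension "?L @ w" ?R bs
    using assms(9,10) by unfold_locales simp_all
  have "exponent period_prefix * real (per bs) = real (length period_prefix)"
    using per_period_prefix per_bs(2) unfolding exponent_def by simp
  moreover have "lce (?L @ w @ ?R) (length (?L @ w @ ?R) - length ?R - per bs + 1)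
      (length (?L @ w @ ?R) - length ?R + 1) = seam_lce"
    unfolding seam_lce_def by simp
  moreover have "longest_prefix_with_period (?L @ w @ ?R) (per bs) = period_prefix"
    unfolding period_prefix_def by simp
  ultimately show ?thesis
    using assms(9) length_period_prefix_ge border_length_le unfolding Let_def by fastforce
qed

end
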